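(* Let $n,d$ be positive integers, let $\mathcal{C}\subseteq S_n$ be an $(n,d)$-permutation code under the block permutation metric, and let $\mathcal{F}=\{A(\pi):\pi\in\mathcal{C}\}$. Then $$|\mathcal{F}|\leqslant \frac{\binom{n}{d}\binom{n}{d}(n-d)!}{\binom{n-1}{n-d}}.$$
   Context: $S_n$ is the symmetric group on $[n]$, permutations written $\pi=(\pi(1),\dots,\pi(n))$. The characteristic set of $\pi$ is $A(\pi)=\{(\pi(i),\pi(i+1)):1\leqslant i<n\}$. The block permutation distance is $d_B(\pi_1,\pi_2)=|A(\pi_1)\setminus A(\pi_2)|$ (equivalently, $d_B(\pi_1,\pi_2)+1$ is the minimum number of consecutive segments into which $\pi_1$ must be cut so that $\pi_2$ is obtained by rearranging these segments). An $(n,d)$-permutation code is a subset $\mathcal{C}\subseteq S_n$ with $d_B(\pi,\sigma)\geqslant d$ for all distinct $\pi,\sigma\in\mathcal{C}$. *)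

theory Defs
  imports Complex_Main
begin

text \<open>A permutation of [n] in one-line notation, as the list (pi(1),...,pi(n)).\<close>
definition Sym :: "nat \<Rightarrow> nat list set" where
  "Sym n = {p. distinct p \<and> set p = {1..n}}"

definition char_set :: "nat list \<Rightarrow> (nat \<times> nat) set" where
  "char_set p = {(p ! i, p ! (i + 1)) | i. i + 1 < length p}"

definition block_dist :: "nat list \<Rightarrow> nat list \<Rightarrow> nat" where
  "block_dist p q = card (char_set p - char_set q)"

definition perm_code :: "nat \<Rightarrow> nat \<Rightarrow> nat list set \<Rightarrow> bool" where
  "perm_code n d C \<longleftrightarrow> C \<subseteq> Sym n \<and>
     (\<forall>p\<in>C. \<forall>q\<in>C. p \<noteq> q \<longrightarrow> block_dist p q \<ge> d)"

end

theory Submission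
  imports Defs "HOL-Library.FuncSet"
begin

text \<open>
  Let \<open>k = n - d\<close>. Every characteristic set has \<open>n - 1\<close> elements and two distinct
  ones share at most \<open>n - 1 - d < k\<close> pairs, so distinct members of \<open>F\<close> have no
  \<open>k\<close>-subset in common: this gives \<open>|F| C(n-1,k)\<close> distinct \<open>k\<close>-sets of pairs.
  Each of them is a \<open>k\<close>-element partial injection of \<open>[n]\<close> into itself, and there
  are only \<open>C(n,k)\<^sup>2 k!\<close> of those.
\<close>

lemma prod_diff_eq_choose_mult_fact: "(\<Prod>i<k. m - i) = (m choose k) * fact (k::nat)"
proof (induction k)
  case 0
  then show ?case by simp
next
  case (Suc k)
  have "(m choose k) * (m - k) = (m choose Suc k) * Suc k"
    by (metis binomial_absorb_comp binomial_absorption mult.commute)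
  then show ?case
    using Suc.IH by (simp add: algebra_simps)
qed

lemma card_mult_choose_le_of_small_intersections:
  fixes F :: "'a set set" and U :: "'a set set"
  assumes "finite U"
    and finite_members: "\<And>A. A \<in> F \<Longrightarrow> finite A"
    and card_members: "\<And>A. A \<in> F \<Longrightarrow> card A = m"
    and small_intersections: "\<And>A B. A \<in> F \<Longrightarrow> B \<in> F \<Longrightarrow> A \<noteq> B \<Longrightarrow> card (A \<inter> B) < k"
    and subsets_in_U: "\<And>A S. A \<in> F \<Longrightarrow> S \<subseteq> A \<Longrightarrow> card S = k \<Longrightarrow> S \<in> U"
  shows "card F * (m choose k) \<le> card U"
proof (cases "finite F")
  case False
  then show ?thesis by simp
next
  case True
  define subsets where "subsets A = {S. S \<subseteq> A \<and> card S = k}" for A :: "'a set"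
  have card_subsets: "card (subsets A) = m choose k" if "A \<in> F" for A
    using n_subsets[OF finite_members[OF that]] card_members[OF that] by (simp add: subsets_def)
  have finite_subsets: "finite (subsets A)" if "A \<in> F" for A
    using finite_members[OF that] by (auto simp: subsets_def intro: finite_subset[of _ "Pow A"])
  have disjoint: "subsets A \<inter> subsets B = {}" if "A \<in> F" "B \<in> F" "A \<noteq> B" for A B
  proof -
    have "card S < k" if "S \<subseteq> A \<inter> B" for S
    proof -
      have "card S \<le> card (A \<inter> B)"
        using that finite_members[OF \<open>A \<in> F\<close>] by (intro card_mono) auto
      then show ?thesis
        using small_intersections[OF \<open>A \<in> F\<close> \<open>B \<in> F\<close> \<open>A \<noteq> B\<close>] by linarith
    qed
    then show ?thesis
      unfolding subsets_def by blast
  qed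
  have "card F * (m choose k) = (\<Sum>A\<in>F. card (subsets A))"
    using card_subsets by simp
  also have "\<dots> = card (\<Union>A\<in>F. subsets A)"
    using True finite_subsets disjoint by (simp add: card_UN_disjoint)
  also have "\<dots> \<le> card U"
    using subsets_in_U unfolding subsets_def by (intro card_mono[OF \<open>finite U\<close>]) blast
  finally show ?thesis .
qed

lemma single_valued_obtains_graph:
  assumes "single_valued S" "S \<subseteq> A \<times> B"
  obtains f where "f \<in> Domain S \<rightarrow>\<^sub>E B" "S = (\<lambda>x. (x, f x)) ` Domain S"
proof
  define f where "f = restrict (\<lambda>x. THE y. (x, y) \<in> S) (Domain S)"
  have unique: "y = f x" if "(x, y) \<in> S" for x y
  proof -
    have "(THE y. (x, y) \<in> S) = y"
      using that assms(1) by (auto simp: single_valued_def)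
    then show ?thesis
      using that by (auto simp: f_def)
  qed
  have graph: "(x, f x) \<in> S" if "x \<in> Domain S" for x
    using that unique by blast
  then show "f \<in> Domain S \<rightarrow>\<^sub>E B"
    using assms(2) by (auto simp: f_def)
  show "S = (\<lambda>x. (x, f x)) ` Domain S"
    using graph unique by auto
qed

definition partial_injections :: "'a set \<Rightarrow> 'b set \<Rightarrow> nat \<Rightarrow> ('a \<times> 'b) set set" where
  "partial_injections A B k =
     {S. S \<subseteq> A \<times> B \<and> card S = k \<and> single_valued S \<and> single_valued (S\<inverse>)}"

lemma finite_partial_injections:
  "finite A \<Longrightarrow> finite B \<Longrightarrow> finite (partial_injections A B k)"
  unfolding partial_injections_def by (rule finite_subset[of _ "Pow (A \<times> B)"]) auto

lemma card_partial_injections_le: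
  assumes "finite A" "finite B"
  shows "card (partial_injections A B k) \<le> (card A choose k) * ((card B choose k) * fact k)"
proof -
  define Ts where "Ts = {T. T \<subseteq> A \<and> card T = k}"
  define Fs where "Fs T = {f \<in> T \<rightarrow>\<^sub>E B. inj_on f T}" for T :: "'a set"
  define graph :: "'a set \<times> ('a \<Rightarrow> 'b) \<Rightarrow> ('a \<times> 'b) set"
    where "graph = (\<lambda>(T, f). (\<lambda>x. (x, f x)) ` T)"
  have finite_Ts: "finite Ts"
    using assms(1) unfolding Ts_def by (auto intro: finite_subset[of _ "Pow A"])
  have card_Fs: "card (Fs T) = (\<Prod>i<k. card B - i)" if "T \<in> Ts" for T
  proof -
    have "finite T"
      using that assms(1) by (auto simp: Ts_def intro: finite_subset)
    then show ?thesis
      using card_inj_on_subset_funcset[OF \<open>finite T\<close> assms(2) subset_refl] that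
      by (simp add: Fs_def Ts_def atLeast0LessThan)
  qed
  have finite_Fs: "finite (Fs T)" if "T \<in> Ts" for T
    using that assms by (auto simp: Fs_def Ts_def intro!: finite_PiE intro: finite_subset)
  have finite_Sigma: "finite (Sigma Ts Fs)"
    using finite_Ts finite_Fs by (rule finite_SigmaI)
  have graph_image: "S \<in> graph ` Sigma Ts Fs"
    if S: "S \<subseteq> A \<times> B" "card S = k" "single_valued S" "single_valued (S\<inverse>)" for S
  proof -
    obtain f where f: "f \<in> Domain S \<rightarrow>\<^sub>E B" and S_eq: "S = (\<lambda>x. (x, f x)) ` Domain S"
      using single_valued_obtains_graph[OF S(3,1)] .
    have "inj_on f (Domain S)"
      using S(4) S_eq unfolding single_valued_def inj_on_def by (metis converse_iff image_eqI)
    moreover have "card (Domain S) = k"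
      using S(2) S_eq card_image[of "\<lambda>x. (x, f x)" "Domain S"] by (simp add: inj_on_def)
    ultimately have "(Domain S, f) \<in> Sigma Ts Fs"
      using S(1) f by (auto simp: Ts_def Fs_def)
    moreover have "S = graph (Domain S, f)"
      using S_eq by (simp add: graph_def)
    ultimately show ?thesis
      by (rule rev_image_eqI)
  qed
  then have "card (partial_injections A B k) \<le> card (graph ` Sigma Ts Fs)"
    using finite_Sigma graph_image unfolding partial_injections_def by (intro card_mono) auto
  also have "\<dots> \<le> card (Sigma Ts Fs)"
    using finite_Sigma by (rule card_image_le)
  also have "\<dots> = (\<Sum>T\<in>Ts. card (Fs T))"
    using finite_Ts finite_Fs by (simp add: card_SigmaI)
  also have "\<dots> = card Ts * (\<Prod>i<k. card B - i)"
    using card_Fs by simp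
  also have "\<dots> = (card A choose k) * ((card B choose k) * fact k)"
    using assms(1) by (simp add: Ts_def n_subsets prod_diff_eq_choose_mult_fact)
  finally show ?thesis .
qed

lemma char_set_conv_image: "char_set p = (\<lambda>i. (p ! i, p ! Suc i)) ` {..<length p - 1}"
  unfolding char_set_def by auto

lemma finite_char_set: "finite (char_set p)"
  by (simp add: char_set_conv_image)

lemma card_char_set: "distinct p \<Longrightarrow> card (char_set p) = length p - 1"
  unfolding char_set_conv_image
  by (subst card_image) (auto simp: inj_on_def nth_eq_iff_index_eq)

lemma char_set_subset: "char_set p \<subseteq> set p \<times> set p"
  unfolding char_set_def by auto

lemma single_valued_char_set: "distinct p \<Longrightarrow> single_valued (char_set p)"
  unfolding single_valued_def char_set_def by (auto simp: nth_eq_iff_index_eq)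

lemma single_valued_converse_char_set: "distinct p \<Longrightarrow> single_valued ((char_set p)\<inverse>)"
  unfolding single_valued_def char_set_def by (auto simp: nth_eq_iff_index_eq)

lemma length_Sym: "p \<in> Sym n \<Longrightarrow> length p = n"
  unfolding Sym_def using distinct_card by fastforce

lemma card_char_set_Sym: "p \<in> Sym n \<Longrightarrow> card (char_set p) = n - 1"
  using card_char_set length_Sym unfolding Sym_def by auto

lemma subset_char_set_in_partial_injections:
  assumes "p \<in> Sym n" "S \<subseteq> char_set p" "card S = k"
  shows "S \<in> partial_injections {1..n} {1..n} k"
proof -
  have "distinct p" "set p = {1..n}"
    using assms(1) by (auto simp: Sym_def)
  then have "S \<subseteq> {1..n} \<times> {1..n}" "single_valued S" "single_valued (S\<inverse>)"
    using assms(2) char_set_subset single_valued_char_set single_valued_converse_char_set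
    by (blast, meson single_valued_subset, meson converse_mono single_valued_subset)
  then show ?thesis
    using assms(3) by (simp add: partial_injections_def)
qed

lemma card_char_set_Int_less:
  assumes "perm_code n d C" "0 < n" "p \<in> C" "q \<in> C" "char_set p \<noteq> char_set q"
  shows "card (char_set p \<inter> char_set q) < n - d"
proof -
  have "p \<in> Sym n" "p \<noteq> q"
    using assms unfolding perm_code_def by auto
  then have "d \<le> card (char_set p - char_set q)"
    using assms unfolding perm_code_def block_dist_def by auto
  then show ?thesis
    using card_Int_Diff[OF finite_char_set, of p "char_set q"] card_char_set_Sym[OF \<open>p \<in> Sym n\<close>]
      \<open>0 < n\<close> by linarith
qed

theorem mainTheorem7:
  fixes n d :: nat and C :: "nat list set"
  assumes "0 < n" and "0 < d" and "d \<le> n"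
    and "perm_code n d C"
  shows "real (card (char_set ` C)) \<le>
    real ((n choose d) * (n choose d) * fact (n - d)) / real ((n - 1) choose (n - d))"
proof -
  define k where "k = n - d"
  have C_Sym: "C \<subseteq> Sym n"
    using assms(4) by (simp add: perm_code_def)
  have "card (char_set ` C) * ((n - 1) choose k) \<le> card (partial_injections {1..n} {1..n} k)"
  proof (rule card_mult_choose_le_of_small_intersections)
    show "card (A \<inter> B) < k" if "A \<in> char_set ` C" "B \<in> char_set ` C" "A \<noteq> B" for A B
      using that card_char_set_Int_less[OF assms(4,1)] unfolding k_def by blast
  qed (use C_Sym finite_char_set card_char_set_Sym subset_char_set_in_partial_injections in
      \<open>auto simp: finite_partial_injections\<close>)
  also have "\<dots> \<le> (n choose k) * ((n choose k) * fact k)"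
    using card_partial_injections_le[of "{1..n}" "{1..n}" k] by simp
  also have "\<dots> = (n choose d) * (n choose d) * fact (n - d)"
    using binomial_symmetric[OF assms(3)] by (simp add: k_def)
  finally have "real (card (char_set ` C)) * real ((n - 1) choose k)
      \<le> real ((n choose d) * (n choose d) * fact (n - d))"
    by (metis of_nat_le_iff of_nat_mult)
  moreover have "0 < (n - 1) choose k"
    using assms by (simp add: k_def)
  ultimately show ?thesis
    by (simp add: k_def pos_le_divide_eq)
qed

end
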